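(* Let $M$ be a transversal matroid with presentation $\mathcal A=(A_1,\ldots,A_r)$. Let $i\in[r]$ and let $B_i\subseteq E(M)$ with $\mathrm{cl}^*(B_i)=\mathrm{cl}^*(A_i)$. Suppose further that for every $B\subseteq E(M)$ with $B_i\subseteq B$ and $A_i\not\subseteq B$, we have $r^*_M(B)<|B|-|\mathcal A(B)|$. Then $(A_1,\ldots,A_{i-1},B_i,A_{i+1},\ldots,A_r)$ is a presentation of $M$.
   Context: A presentation $\mathcal A$ of a transversal matroid $M$ means $M=M[\mathcal A]$, whose independent sets are the partial transversals of $\mathcal A$. $\mathrm{cl}^*$ and $r^*_M$ are the closure and rank functions of the dual $M^*$. For $X\subseteq E(M)$, $\mathcal A(X)=\{j\in[r]: A_j\subseteq X\}$. *)

theory Defs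
  imports Main
begin

text \<open>A presentation is a family A indexed by {0..<r} (standing for [r]).
  X is a partial transversal of A iff there is an injection f of X into {0..<r}
  with x in A (f x) for every x in X.\<close>
definition partial_transversal :: "nat \<Rightarrow> (nat \<Rightarrow> 'a set) \<Rightarrow> 'a set \<Rightarrow> bool" where
  "partial_transversal r A X \<longleftrightarrow>
     (\<exists>f. inj_on f X \<and> (\<forall>x\<in>X. f x < r \<and> x \<in> A (f x)))"

definition tm_indep :: "'a set \<Rightarrow> nat \<Rightarrow> (nat \<Rightarrow> 'a set) \<Rightarrow> 'a set \<Rightarrow> bool" where
  "tm_indep E r A X \<longleftrightarrow> X \<subseteq> E \<and> partial_transversal r A X"

definition mrank :: "('a set \<Rightarrow> bool) \<Rightarrow> 'a set \<Rightarrow> nat" where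
  "mrank indep X = Max {card Y | Y. Y \<subseteq> X \<and> indep Y}"

definition dual_rank :: "'a set \<Rightarrow> ('a set \<Rightarrow> bool) \<Rightarrow> 'a set \<Rightarrow> int" where
  "dual_rank E indep X = int (card X) + int (mrank indep (E - X)) - int (mrank indep E)"

definition dual_cl :: "'a set \<Rightarrow> ('a set \<Rightarrow> bool) \<Rightarrow> 'a set \<Rightarrow> 'a set" where
  "dual_cl E indep X = {e \<in> E. dual_rank E indep (insert e X) = dual_rank E indep X}"

definition calA :: "nat \<Rightarrow> (nat \<Rightarrow> 'a set) \<Rightarrow> 'a set \<Rightarrow> nat set" where
  "calA r A X = {j. j < r \<and> A j \<subseteq> X}"

end

theory Submission
  imports Defs
begin

text \<open>Both inclusions rest on the augmenting-path lemma for matchings: a matching f of X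
  extends to an element e \<notin> X unless some R \<subseteq> X satisfies N(R \<union> {e}) \<subseteq> f(R), a Hall
  obstruction that puts e in the closure of R in M[\<A>].

  If a set independent for the new presentation is not independent for \<A>, the element y
  matched to i lies in B_i - A_i and has such an obstruction R, which avoids A_i.
  So y is spanned by E - A_i - {y}; but y \<in> cl*(A_i) - A_i says that y is a coloop of
  M \ A_i.

  Conversely, an obstruction for the new presentation at an element e \<in> A_i matched to i
  gives an independent set Y = R \<union> {e} disjoint from B_i with |N(Y)| = |Y|. For B = E - Y
  this yields r*(B) = |B| + r(Y) - r(E) \<ge> |B| + |Y| - r and |\<A>(B)| = r - |N(Y)| = r - |Y|,
  contradicting r*(B) < |B| - |\<A>(B)|.\<close>

definition matching :: "nat \<Rightarrow> (nat \<Rightarrow> 'a set) \<Rightarrow> 'a set \<Rightarrow> ('a \<Rightarrow> nat) \<Rightarrow> bool" where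
  "matching r A X f \<longleftrightarrow> inj_on f X \<and> (\<forall>x\<in>X. f x < r \<and> x \<in> A (f x))"

definition neighbours :: "nat \<Rightarrow> (nat \<Rightarrow> 'a set) \<Rightarrow> 'a set \<Rightarrow> nat set" where
  "neighbours r A X = {j. j < r \<and> A j \<inter> X \<noteq> {}}"

lemma tm_indep_iff_matching: "tm_indep E r A X \<longleftrightarrow> X \<subseteq> E \<and> (\<exists>f. matching r A X f)"
  unfolding tm_indep_def partial_transversal_def matching_def by blast

lemma matching_subset: "matching r A X f \<Longrightarrow> Y \<subseteq> X \<Longrightarrow> matching r A Y f"
  unfolding matching_def by (meson inj_on_subset subsetD)

lemma matching_image_subset_neighbours: "matching r A X f \<Longrightarrow> f ` X \<subseteq> neighbours r A X"
  unfolding matching_def neighbours_def by blast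

lemma neighbours_subset_lessThan: "neighbours r A X \<subseteq> {..<r}"
  unfolding neighbours_def by blast

lemma matching_card_le:
  assumes "matching r A X f"
  shows "card X \<le> r"
proof -
  have "card X = card (f ` X)" using assms unfolding matching_def by (simp add: card_image)
  also have "\<dots> \<le> card {..<r}"
    using matching_image_subset_neighbours[OF assms] neighbours_subset_lessThan[of r A X]
    by (intro card_mono) auto
  finally show ?thesis by simp
qed

lemma neighbours_insert: "neighbours r A (insert x X) = neighbours r A {x} \<union> neighbours r A X"
  unfolding neighbours_def by blast

lemma neighbours_UN: "neighbours r A (\<Union>j\<in>J. X j) = (\<Union>j\<in>J. neighbours r A (X j))"
  unfolding neighbours_def by blast

lemma neighbours_mono: "X \<subseteq> Y \<Longrightarrow> neighbours r A X \<subseteq> neighbours r A Y"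
  unfolding neighbours_def by blast

lemma neighbours_fun_upd_empty: "neighbours r (A(i := {})) X = neighbours r A X - {i}"
  unfolding neighbours_def by auto

lemma matching_insert:
  assumes "matching r A X f" "e \<notin> X" "j < r" "e \<in> A j" "j \<notin> f ` X"
  shows "matching r A (insert e X) (f(e := j))"
  using assms unfolding matching_def by (auto simp: inj_on_def)

lemma matching_fun_upd:
  assumes "matching r A X f" "\<forall>x\<in>X. f x = i \<longrightarrow> x \<in> C"
  shows "matching r (A(i := C)) X f"
  using assms unfolding matching_def by auto

lemma matching_fun_upd_empty_iff:
  "matching r (A(i := {})) X f \<longleftrightarrow> matching r A X f \<and> i \<notin> f ` X"
  unfolding matching_def by auto

lemma matching_Diff_singleton:
  assumes "matching r A X f" "x \<in> X"
  shows "matching r (A(f x := {})) (X - {x}) f"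
  using assms unfolding matching_fun_upd_empty_iff matching_def by (auto simp: inj_on_def)

lemma matching_extend_or_obstruction:
  assumes "finite X" "matching r A X f" "e \<notin> X"
  shows "(\<exists>g. matching r A (insert e X) g) \<or> (\<exists>R\<subseteq>X. neighbours r A (insert e R) \<subseteq> f ` R)"
  using assms
proof (induction "card X" arbitrary: X A f e rule: less_induct)
  case less
  show ?case
  proof (cases "\<exists>g. matching r A (insert e X) g")
    case True
    then show ?thesis ..
  next
    case no_ext: False
    \<comment> \<open>Every index j available to e is used by some x \<in> X. Either x can be rematched
      without j, freeing j for e, or induction yields an obstruction at x for the family with
      A j emptied; adding x to it gives an obstruction for A whose image contains j.\<close>
    have "\<exists>R\<subseteq>X. neighbours r A R \<subseteq> f ` R \<and> j \<in> f ` R" if j: "j \<in> neighbours r A {e}" for j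
    proof -
      have "j < r" "e \<in> A j" using j unfolding neighbours_def by auto
      then have "j \<in> f ` X" using matching_insert[OF less.prems(2,3)] no_ext by blast
      then obtain x where x: "x \<in> X" "f x = j" by blast
      have m: "matching r (A(j := {})) (X - {x}) f"
        using matching_Diff_singleton[OF less.prems(2) x(1)] x(2) by simp
      have "card (X - {x}) < card X" using less.prems(1) x(1) by (rule card_Diff1_less)
      from less.hyps[OF this _ m, where e = x] less.prems(1) x(1)
      consider (ext) g where "matching r (A(j := {})) X g"
        | (obstruction) R where "R \<subseteq> X - {x}" "neighbours r (A(j := {})) (insert x R) \<subseteq> f ` R"
        by (auto simp: insert_absorb)
      then show ?thesis
      proof cases
        case ext
        then show ?thesis
          using matching_insert[of r A X g e j] \<open>j < r\<close> \<open>e \<in> A j\<close> less.prems(3) no_ext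
          by (auto simp: matching_fun_upd_empty_iff)
      next
        case obstruction
        have "neighbours r A (insert x R) \<subseteq> insert j (neighbours r (A(j := {})) (insert x R))"
          using neighbours_fun_upd_empty[of r A j "insert x R"] by blast
        also have "\<dots> \<subseteq> f ` insert x R" using obstruction(2) x(2) by blast
        finally show ?thesis using obstruction(1) x by (intro exI[of _ "insert x R"]) auto
      qed
    qed
    then obtain R where R: "\<And>j. j \<in> neighbours r A {e} \<Longrightarrow>
        R j \<subseteq> X \<and> neighbours r A (R j) \<subseteq> f ` R j \<and> j \<in> f ` R j"
      by metis
    define J where "J = neighbours r A {e}"
    have "neighbours r A (insert e (\<Union>j\<in>J. R j)) = J \<union> (\<Union>j\<in>J. neighbours r A (R j))"
      using neighbours_insert[of r A e "\<Union>j\<in>J. R j"] neighbours_UN[of r A R J] by (simp add: J_def)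
    also have "\<dots> \<subseteq> (\<Union>j\<in>J. f ` R j)" using R unfolding J_def by blast
    also have "\<dots> = f ` (\<Union>j\<in>J. R j)" by blast
    finally have "neighbours r A (insert e (\<Union>j\<in>J. R j)) \<subseteq> f ` (\<Union>j\<in>J. R j)" .
    moreover have "(\<Union>j\<in>J. R j) \<subseteq> X" using R unfolding J_def by blast
    ultimately show ?thesis by blast
  qed
qed

lemma matching_exchange:
  assumes "finite R" "matching r A R g" "y \<notin> R" "neighbours r A (insert y R) \<subseteq> g ` R"
    and "matching r A S h" "y \<in> S"
  shows "\<exists>z\<in>R - S. \<exists>h'. matching r A (insert z (S - {y})) h'"
  using assms
proof (induction "card R" arbitrary: R A S h y g rule: less_induct)
  case less
  \<comment> \<open>The index k of y in S is used by some z \<in> R. Give k to z; if z \<in> S, then z must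
    itself be replaced, which is the same problem for R - {z} with A k emptied.\<close>
  define k where "k = h y"
  have "k < r" "y \<in> A k" using less.prems(5,6) unfolding matching_def k_def by auto
  then have "k \<in> g ` R" using less.prems(4) unfolding neighbours_def by blast
  then obtain z where z: "z \<in> R" "g z = k" by blast
  have z_Ak: "z \<in> A k" using less.prems(2) z unfolding matching_def by auto
  have S_y: "matching r (A(k := {})) (S - {y}) h"
    using matching_Diff_singleton[OF less.prems(5,6)] unfolding k_def .
  show ?case
  proof (cases "z \<in> S")
    case False
    then have "matching r A (insert z (S - {y})) (h(z := k))"
      using S_y \<open>k < r\<close> z_Ak by (intro matching_insert) (auto simp: matching_fun_upd_empty_iff)
    then show ?thesis using z(1) False by blast
  next
    case True
    have R_z: "matching r (A(k := {})) (R - {z}) g"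
      using matching_Diff_singleton[OF less.prems(2) z(1)] z(2) by simp
    have "neighbours r (A(k := {})) (insert z (R - {z})) \<subseteq> neighbours r A (insert y R) - {k}"
      using z(1) neighbours_mono[of R "insert y R" r A]
      by (auto simp: neighbours_fun_upd_empty insert_absorb)
    also have "\<dots> \<subseteq> g ` (R - {z})" using less.prems(4) z(2) by blast
    finally have "neighbours r (A(k := {})) (insert z (R - {z})) \<subseteq> g ` (R - {z})" .
    moreover have "card (R - {z}) < card R" using less.prems(1) z(1) by (rule card_Diff1_less)
    moreover have "z \<in> S - {y}" using True z(1) less.prems(3) by blast
    ultimately obtain w h' where w: "w \<in> R - {z} - (S - {y})"
      and h': "matching r (A(k := {})) (insert w (S - {y} - {z})) h'"
      using less.hyps[OF _ _ R_z _ _ S_y] less.prems(1) by blast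
    have "insert z (insert w (S - {y} - {z})) = insert w (S - {y})"
      using \<open>z \<in> S - {y}\<close> by blast
    moreover have "matching r A (insert z (insert w (S - {y} - {z}))) (h'(z := k))"
      using h' w \<open>k < r\<close> z_Ak by (intro matching_insert) (auto simp: matching_fun_upd_empty_iff)
    ultimately show ?thesis using w less.prems(3) by (intro bexI[of _ w]) auto
  qed
qed

lemma matching_fun_upd_extend_or_obstruction:
  assumes "finite X" "matching r A X f"
  shows "(\<exists>g. matching r (A(i := C)) X g) \<or>
    (\<exists>e\<in>X. \<exists>R\<subseteq>X - {e}. f e = i \<and> i \<notin> f ` R \<and>
      neighbours r (A(i := C)) (insert e R) \<subseteq> f ` R)"
proof (cases "\<forall>x\<in>X. f x = i \<longrightarrow> x \<in> C")
  case True
  then show ?thesis using matching_fun_upd[OF assms(2)] by blast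
next
  case False
  then obtain e where e: "e \<in> X" "f e = i" "e \<notin> C" by blast
  have "matching r A (X - {e}) f" "i \<notin> f ` (X - {e})"
    using matching_Diff_singleton[OF assms(2) e(1)] e(2)
    by (simp_all add: matching_fun_upd_empty_iff)
  then have "matching r (A(i := C)) (X - {e}) f"
    by (intro matching_fun_upd) auto
  from matching_extend_or_obstruction[OF _ this, of e] assms(1) e(1)
  consider (ext) g where "matching r (A(i := C)) X g"
    | (obstruction) R where "R \<subseteq> X - {e}" "neighbours r (A(i := C)) (insert e R) \<subseteq> f ` R"
    by (auto simp: insert_absorb)
  then show ?thesis
  proof cases
    case ext
    then show ?thesis by blast
  next
    case obstruction
    then show ?thesis using \<open>i \<notin> f ` (X - {e})\<close> e(1,2) by blast
  qed
qed

lemma finite_card_subsets: "finite X \<Longrightarrow> finite {card Y | Y. Y \<subseteq> X \<and> P Y}"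
  by (rule finite_subset[of _ "card ` Pow X"]) auto

lemma mrank_ge: "finite X \<Longrightarrow> Y \<subseteq> X \<Longrightarrow> indep Y \<Longrightarrow> card Y \<le> mrank indep X"
  unfolding mrank_def by (rule Max_ge) (auto intro: finite_card_subsets)

lemma mrank_obtain:
  assumes "finite X" "indep {}"
  obtains Y where "Y \<subseteq> X" "indep Y" "card Y = mrank indep X"
proof -
  have "{card Y | Y. Y \<subseteq> X \<and> indep Y} \<noteq> {}" using assms(2) by blast
  then have "mrank indep X \<in> {card Y | Y. Y \<subseteq> X \<and> indep Y}"
    unfolding mrank_def by (rule Max_in[OF finite_card_subsets[OF assms(1)]])
  then show ?thesis using that by auto
qed

lemma tm_indep_empty: "tm_indep E r A {}"
  unfolding tm_indep_iff_matching matching_def by simp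

lemma mrank_tm_indep_le:
  assumes "finite X"
  shows "mrank (tm_indep E r A) X \<le> r"
proof -
  obtain Y where "Y \<subseteq> X" "tm_indep E r A Y" "card Y = mrank (tm_indep E r A) X"
    by (rule mrank_obtain[where indep = "tm_indep E r A", OF assms tm_indep_empty])
  then show ?thesis using matching_card_le unfolding tm_indep_iff_matching by metis
qed

lemma subset_dual_cl: "X \<subseteq> E \<Longrightarrow> X \<subseteq> dual_cl E indep X"
  unfolding dual_cl_def by (auto simp: insert_absorb)

lemma dual_cl_mrank_Diff:
  assumes "finite X" "y \<in> dual_cl E indep X" "y \<notin> X"
  shows "mrank indep (E - X - {y}) + 1 = mrank indep (E - X)"
proof -
  have "E - insert y X = E - X - {y}" by blast
  then show ?thesis using assms unfolding dual_cl_def dual_rank_def by simp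
qed

lemma calA_Diff: "\<forall>j<r. A j \<subseteq> E \<Longrightarrow> calA r A (E - Y) = {..<r} - neighbours r A Y"
  unfolding calA_def neighbours_def by auto

lemma mrank_tm_indep_Diff_spanned:
  assumes "finite E" "Z \<subseteq> E" "R \<subseteq> Z - {y}" "matching r A R g"
    and "neighbours r A (insert y R) \<subseteq> g ` R"
  shows "mrank (tm_indep E r A) Z \<le> mrank (tm_indep E r A) (Z - {y})"
proof -
  have "finite Z" using assms(1,2) by (rule finite_subset[rotated])
  then obtain S where S: "S \<subseteq> Z" "tm_indep E r A S" "card S = mrank (tm_indep E r A) Z"
    by (rule mrank_obtain[where indep = "tm_indep E r A", OF _ tm_indep_empty])
  have "\<exists>S'\<subseteq>Z - {y}. tm_indep E r A S' \<and> card S' = card S"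
  proof (cases "y \<in> S")
    case False
    then show ?thesis using S by blast
  next
    case True
    obtain h where "matching r A S h" using S(2) unfolding tm_indep_iff_matching by blast
    moreover have "finite R" using assms(3) \<open>finite Z\<close> by (meson finite_Diff finite_subset)
    moreover have "y \<notin> R" using assms(3) by blast
    ultimately obtain z h' where z: "z \<in> R - S" and h': "matching r A (insert z (S - {y})) h'"
      using matching_exchange[OF _ assms(4) _ assms(5) _ True] by blast
    have "finite S" using S(1) \<open>finite Z\<close> by (rule finite_subset)
    then have "card (insert z (S - {y})) = card S" using z card.remove[OF _ True] by simp
    moreover have "insert z (S - {y}) \<subseteq> Z - {y}" using S(1) z assms(3) by blast
    moreover then have "tm_indep E r A (insert z (S - {y}))"
      unfolding tm_indep_iff_matching using h' assms(2) by blast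
    ultimately show ?thesis by blast
  qed
  then obtain S' where "S' \<subseteq> Z - {y}" "tm_indep E r A S'" "card S' = card S" by blast
  then show ?thesis using S(3) mrank_ge[OF finite_Diff[OF \<open>finite Z\<close>]] by metis
qed

lemma dual_rank_complement_ge:
  assumes "finite E" "\<forall>j<r. A j \<subseteq> E" "Y \<subseteq> E"
    and "matching r A Y f" "neighbours r A Y \<subseteq> f ` Y"
  shows "int (card (E - Y)) - int (card (calA r A (E - Y)))
    \<le> dual_rank E (tm_indep E r A) (E - Y)"
proof -
  have "finite Y" using assms(1,3) by (rule finite_subset[rotated])
  have "card (calA r A (E - Y)) = r - card (neighbours r A Y)"
    unfolding calA_Diff[OF assms(2)]
    using neighbours_subset_lessThan[of r A Y]
      card_Diff_subset[OF finite_subset[OF _ finite_lessThan] neighbours_subset_lessThan[of r A Y]]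
    by simp
  moreover have "card (neighbours r A Y) \<le> card Y"
    using assms(5) card_image_le[OF \<open>finite Y\<close>] card_mono[OF finite_imageI[OF \<open>finite Y\<close>]]
    by (meson order_trans)
  moreover have "card Y \<le> mrank (tm_indep E r A) Y"
    using \<open>finite Y\<close> assms(3,4) tm_indep_iff_matching by (blast intro: mrank_ge)
  moreover have "mrank (tm_indep E r A) E \<le> r" using assms(1) by (rule mrank_tm_indep_le)
  moreover have "E - (E - Y) = Y" using assms(3) by blast
  ultimately show ?thesis unfolding dual_rank_def by simp
qed

lemma tm_indep_of_fun_upd_dual_cl:
  assumes "finite E" "A i \<subseteq> E" "i < r" "C \<subseteq> dual_cl E (tm_indep E r A) (A i)"
    and "tm_indep E r (A(i := C)) I"
  shows "tm_indep E r A I"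
proof -
  obtain g where "I \<subseteq> E" and g: "matching r (A(i := C)) I g"
    using assms(5) unfolding tm_indep_iff_matching by blast
  have "finite I" using \<open>I \<subseteq> E\<close> assms(1) by (rule finite_subset)
  from matching_fun_upd_extend_or_obstruction[OF this g, of i "A i"]
  consider (ext) h where "matching r A I h"
    | (obstruction) y R where "y \<in> I" "R \<subseteq> I - {y}" "g y = i" "i \<notin> g ` R"
        "neighbours r A (insert y R) \<subseteq> g ` R"
    by auto
  then show ?thesis
  proof cases
    case ext
    then show ?thesis using \<open>I \<subseteq> E\<close> unfolding tm_indep_iff_matching by blast
  next
    case obstruction
    have "y \<in> C" using g obstruction(1,3) unfolding matching_def by force
    have "A i \<inter> insert y R = {}"
      using assms(3) obstruction(4,5) unfolding neighbours_def by blast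
    then have R: "R \<subseteq> E - A i - {y}" using obstruction(1,2) \<open>I \<subseteq> E\<close> by blast
    have "matching r A R g"
      using matching_fun_upd[of r "A(i := C)" R g i "A i"]
        matching_subset[OF g] obstruction(2,4) by auto
    then have "mrank (tm_indep E r A) (E - A i) \<le> mrank (tm_indep E r A) (E - A i - {y})"
      using mrank_tm_indep_Diff_spanned[OF assms(1) _ R _ obstruction(5)] by blast
    moreover have "mrank (tm_indep E r A) (E - A i - {y}) + 1 = mrank (tm_indep E r A) (E - A i)"
      using dual_cl_mrank_Diff[OF finite_subset[OF assms(2,1)]] assms(4) \<open>y \<in> C\<close>
        \<open>A i \<inter> insert y R = {}\<close> by blast
    ultimately have False by linarith
    then show ?thesis ..
  qed
qed

lemma tm_indep_fun_upd_of_dual_rank_bound: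
  assumes "finite E" "\<forall>j<r. A j \<subseteq> E" "i < r" "C \<subseteq> E"
    and "\<forall>B. B \<subseteq> E \<and> C \<subseteq> B \<and> \<not> A i \<subseteq> B \<longrightarrow>
           dual_rank E (tm_indep E r A) B < int (card B) - int (card (calA r A B))"
    and "tm_indep E r A I"
  shows "tm_indep E r (A(i := C)) I"
proof -
  obtain f where "I \<subseteq> E" and f: "matching r A I f"
    using assms(6) unfolding tm_indep_iff_matching by blast
  have "finite I" using \<open>I \<subseteq> E\<close> assms(1) by (rule finite_subset)
  from matching_fun_upd_extend_or_obstruction[OF this f, of i C]
  consider (ext) h where "matching r (A(i := C)) I h"
    | (obstruction) e R where "e \<in> I" "R \<subseteq> I - {e}" "f e = i" "i \<notin> f ` R"
        "neighbours r (A(i := C)) (insert e R) \<subseteq> f ` R"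
    by auto
  then show ?thesis
  proof cases
    case ext
    then show ?thesis using \<open>I \<subseteq> E\<close> unfolding tm_indep_iff_matching by blast
  next
    case obstruction
    define Y where "Y = insert e R"
    have "Y \<subseteq> E" using obstruction(1,2) \<open>I \<subseteq> E\<close> unfolding Y_def by blast
    have "e \<in> A i" using f obstruction(1,3) unfolding matching_def by force
    have "i \<notin> neighbours r (A(i := C)) Y" using obstruction(4,5) unfolding Y_def by blast
    then have "C \<inter> Y = {}" using assms(3) unfolding neighbours_def by auto
    have "neighbours r A Y \<subseteq> insert i (neighbours r (A(i := C)) Y)"
      unfolding neighbours_def by auto
    also have "\<dots> \<subseteq> f ` Y" using obstruction(3,5) unfolding Y_def by blast
    finally have "neighbours r A Y \<subseteq> f ` Y" .
    moreover have "matching r A Y f"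
      using matching_subset[OF f] obstruction(1,2) unfolding Y_def by blast
    ultimately have "int (card (E - Y)) - int (card (calA r A (E - Y)))
        \<le> dual_rank E (tm_indep E r A) (E - Y)"
      using dual_rank_complement_ge[OF assms(1,2) \<open>Y \<subseteq> E\<close>] by blast
    moreover have "dual_rank E (tm_indep E r A) (E - Y)
        < int (card (E - Y)) - int (card (calA r A (E - Y)))"
    proof -
      have "C \<subseteq> E - Y" "\<not> A i \<subseteq> E - Y"
        using assms(4) \<open>C \<inter> Y = {}\<close> \<open>e \<in> A i\<close> unfolding Y_def by auto
      then show ?thesis using assms(5) by blast
    qed
    ultimately have False by linarith
    then show ?thesis ..
  qed
qed

theorem lemma2p7:
  fixes E :: "'a set" and r i :: nat and A :: "nat \<Rightarrow> 'a set" and Bi :: "'a set"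
  assumes "finite E"
    and "\<forall>j<r. A j \<subseteq> E"
    and "i < r"
    and "Bi \<subseteq> E"
    and "dual_cl E (tm_indep E r A) Bi = dual_cl E (tm_indep E r A) (A i)"
    and "\<forall>B. B \<subseteq> E \<and> Bi \<subseteq> B \<and> \<not> A i \<subseteq> B \<longrightarrow>
           dual_rank E (tm_indep E r A) B < int (card B) - int (card (calA r A B))"
  shows "tm_indep E r (A(i := Bi)) = tm_indep E r A"
proof (intro ext iffI)
  fix I
  have "A i \<subseteq> E" using assms(2,3) by blast
  moreover have "Bi \<subseteq> dual_cl E (tm_indep E r A) (A i)"
    using subset_dual_cl[OF assms(4), of "tm_indep E r A"] assms(5) by simp
  moreover assume "tm_indep E r (A(i := Bi)) I"
  ultimately show "tm_indep E r A I"
    by (rule tm_indep_of_fun_upd_dual_cl[OF assms(1) _ assms(3)])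
next
  fix I
  assume "tm_indep E r A I"
  then show "tm_indep E r (A(i := Bi)) I"
    by (rule tm_indep_fun_upd_of_dual_rank_bound[OF assms(1-4,6)])
qed

end
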